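(* Let $A=M_2(\mathbb{C})$ with the first order calculus $\Omega^1=M_2 s\oplus M_2 t$ described below, and let $\mathcal{S}=M_2(\mathbb{C})\oplus M_2(\mathbb{C})$ with left action by matrix multiplication on each summand and inner product $\langle\!\langle\overline{x\oplus u},y\oplus v\rangle\!\rangle=\mathrm{Tr}(x^*y+u^*v)$. Define $D(x\oplus u)=[E_{12},u]\oplus[E_{21},x]$, $\mathcal{J}(x\oplus u)=(-u^* )\oplus x^*$, $\gamma(x\oplus u)=(-x)\oplus u$, $(p\oplus q)\triangleright(x\oplus u)=pu\oplus qx$ (identifying $ps+qt\in\Omega^1$ with $p\oplus q$), $\nabla_{\mathcal{S}}(x\oplus u)={\rm d}x\otimes(1\oplus0)+{\rm d}u\otimes(0\oplus1)$, and $\sigma_{\mathcal{S}}((x\oplus u)\otimes\xi)=x\xi\otimes(1\oplus0)+u\xi\otimes(0\oplus1)$. Then $(\nabla_{\mathcal S},\sigma_{\mathcal S})$ is a left bimodule connection for the bimodule structure $\psi.a=\mathcal J a^*\mathcal J^{-1}\psi$ (explicitly $(x\oplus u).a=xa\oplus ua$), $D=\triangleright\circ\nabla_{\mathcal{S}}$, and $(A,\mathcal{S},D,\mathcal{J},\gamma)$ satisfies: $D$ hermitian, $\gamma^*=\gamma$, $\mathcal J$ an antilinear isometry ($\langle\!\langle\overline{\mathcal J\psi},\mathcal J\phi\rangle\!\rangle=\langle\!\langle\overline\phi,\psi\rangle\!\rangle$), $\mathcal{J}^2=-1$, $\mathcal{J}\gamma=-\gamma\mathcal{J}$, $\gamma^2=1$,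 $[\gamma,a]=0$, $D\gamma=-\gamma D$, $[a,\mathcal{J}b\mathcal{J}^{-1}]=0$, $\mathcal{J}D=D\mathcal{J}$, and $[[D,a],\mathcal{J}b\mathcal{J}^{-1}]=0$ for all $a,b\in A$; i.e. a real spectral triple of dimension $2$ with $\epsilon=-1,\epsilon'=1,\epsilon''=-1$. Moreover, with $\gamma^i=\imath\sigma^i$ ($\sigma^i$ Pauli matrices) acting on $\mathcal S=\mathbb C^2\otimes M_2(\mathbb C)$, $D=-\tfrac12\big(\gamma^1\otimes[\gamma^1,\cdot\,]-\gamma^2\otimes[\gamma^2,\cdot\,]\big)$.
   Context: $E_{ij}$ are the matrix units. The calculus: $\Omega^1=M_2s\oplus M_2t$ as an $M_2$-bimodule, where $s,t$ are central symbols with $st=ts$, $s^2=t^2=0$, and ${\rm d}a=[E_{12}s+E_{21}t,a]=[E_{12},a]s+[E_{21},a]t$ (graded commutator in higher degree); the star is the usual matrix adjoint with $s^*=-t$. The commutator $[D,a]$ means $D\circ a-a\circ D$ with $a$ acting by left multiplication. *)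

theory Defs
  imports "HOL-Analysis.Analysis" "HOL-Library.Product_Plus"
begin

type_synonym m2 = "complex^2^2"

type_synonym spinor = "m2 \<times> m2"

text \<open>Omega^1 = M_2 s (+) M_2 t; a pair (p,q) stands for p s + q t.\<close>
type_synonym omega1 = "m2 \<times> m2"

text \<open>Omega^1 tensor_A S.  Since s,t are central and Omega^1 is free on them,
  Omega^1 tensor_A S = s tensor S (+) t tensor S; a pair (phi1,phi2) stands for
  s tensor phi1 + t tensor phi2.\<close>
type_synonym omegaS = "spinor \<times> spinor"

definition E :: "2 \<Rightarrow> 2 \<Rightarrow> m2" where
  "E i j = (\<chi> k l. if k = i \<and> l = j then 1 else 0)"

definition E12 :: m2 where "E12 = E 1 2"
definition E21 :: m2 where "E21 = E 2 1"

definition mcomm :: "m2 \<Rightarrow> m2 \<Rightarrow> m2" where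
  "mcomm a b = a ** b - b ** a"

definition madj :: "m2 \<Rightarrow> m2" where
  "madj m = (\<chi> i j. cnj (m $ j $ i))"

definition mtr :: "m2 \<Rightarrow> complex" where
  "mtr m = (\<Sum>i\<in>UNIV. m $ i $ i)"

definition msc :: "complex \<Rightarrow> m2 \<Rightarrow> m2" where
  "msc c m = (\<chi> i j. c * m $ i $ j)"

definition dA :: "m2 \<Rightarrow> omega1" where
  "dA a = (mcomm E12 a, mcomm E21 a)"

definition lact :: "m2 \<Rightarrow> spinor \<Rightarrow> spinor" where
  "lact a \<psi> = (a ** fst \<psi>, a ** snd \<psi>)"

definition lactO :: "m2 \<Rightarrow> omega1 \<Rightarrow> omega1" where
  "lactO a \<xi> = (a ** fst \<xi>, a ** snd \<xi>)"

definition ractO :: "omega1 \<Rightarrow> m2 \<Rightarrow> omega1" where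
  "ractO \<xi> a = (fst \<xi> ** a, snd \<xi> ** a)"

definition lactT :: "m2 \<Rightarrow> omegaS \<Rightarrow> omegaS" where
  "lactT a \<Phi> = (lact a (fst \<Phi>), lact a (snd \<Phi>))"

text \<open>The class of the simple tensor xi tensor psi in Omega^1 tensor_A S:
  (p s + q t) tensor psi = s tensor (p psi) + t tensor (q psi).\<close>
definition tens1 :: "omega1 \<Rightarrow> spinor \<Rightarrow> omegaS" where
  "tens1 \<xi> \<psi> = (lact (fst \<xi>) \<psi>, lact (snd \<xi>) \<psi>)"

definition ssc :: "complex \<Rightarrow> spinor \<Rightarrow> spinor" where
  "ssc c \<psi> = (msc c (fst \<psi>), msc c (snd \<psi>))"

definition tsc :: "complex \<Rightarrow> omegaS \<Rightarrow> omegaS" where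
  "tsc c \<Phi> = (ssc c (fst \<Phi>), ssc c (snd \<Phi>))"

definition ip :: "spinor \<Rightarrow> spinor \<Rightarrow> complex" where
  "ip \<phi> \<psi> = mtr (madj (fst \<phi>) ** fst \<psi> + madj (snd \<phi>) ** snd \<psi>)"

definition Dop :: "spinor \<Rightarrow> spinor" where
  "Dop \<psi> = (mcomm E12 (snd \<psi>), mcomm E21 (fst \<psi>))"

definition Jop :: "spinor \<Rightarrow> spinor" where
  "Jop \<psi> = (- madj (snd \<psi>), madj (fst \<psi>))"

definition gam :: "spinor \<Rightarrow> spinor" where
  "gam \<psi> = (- fst \<psi>, snd \<psi>)"

definition ract :: "spinor \<Rightarrow> m2 \<Rightarrow> spinor" where
  "ract \<psi> a = Jop (lact (madj a) (inv Jop \<psi>))"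

definition ractT :: "omegaS \<Rightarrow> m2 \<Rightarrow> omegaS" where
  "ractT \<Phi> a = (ract (fst \<Phi>) a, ract (snd \<Phi>) a)"

definition tri :: "omega1 \<Rightarrow> spinor \<Rightarrow> spinor" where
  "tri \<xi> \<psi> = (fst \<xi> ** snd \<psi>, snd \<xi> ** fst \<psi>)"

definition triT :: "omegaS \<Rightarrow> spinor" where
  "triT \<Phi> = tri (mat 1, 0) (fst \<Phi>) + tri (0, mat 1) (snd \<Phi>)"

definition nablaS :: "spinor \<Rightarrow> omegaS" where
  "nablaS \<psi> = tens1 (dA (fst \<psi>)) (mat 1, 0) + tens1 (dA (snd \<psi>)) (0, mat 1)"

definition sigmaS :: "spinor \<Rightarrow> omega1 \<Rightarrow> omegaS" where
  "sigmaS \<psi> \<xi> = tens1 (lactO (fst \<psi>) \<xi>) (mat 1, 0) + tens1 (lactO (snd \<psi>) \<xi>) (0, mat 1)"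

text \<open>Left bimodule connection (Beggs-Majid) on the bimodule S with right action r:
  nabla is C-linear with left Leibniz rule; sigma, given on pairs, is biadditive and
  A-balanced (so it is well defined on S tensor_A Omega^1), an A-bimodule map, and
  the twisted right Leibniz rule holds.\<close>
definition left_bimodule_connection ::
  "(spinor \<Rightarrow> m2 \<Rightarrow> spinor) \<Rightarrow> (spinor \<Rightarrow> omegaS) \<Rightarrow> (spinor \<Rightarrow> omega1 \<Rightarrow> omegaS) \<Rightarrow> bool" where
  "left_bimodule_connection r nabla sig \<longleftrightarrow>
     (\<forall>\<phi> \<psi>. nabla (\<phi> + \<psi>) = nabla \<phi> + nabla \<psi>) \<and>
     (\<forall>c \<psi>. nabla (ssc c \<psi>) = tsc c (nabla \<psi>)) \<and>
     (\<forall>a \<psi>. nabla (lact a \<psi>) = tens1 (dA a) \<psi> + lactT a (nabla \<psi>)) \<and>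
     (\<forall>\<phi> \<psi> \<xi>. sig (\<phi> + \<psi>) \<xi> = sig \<phi> \<xi> + sig \<psi> \<xi>) \<and>
     (\<forall>\<psi> \<xi> \<eta>. sig \<psi> (\<xi> + \<eta>) = sig \<psi> \<xi> + sig \<psi> \<eta>) \<and>
     (\<forall>\<psi> a \<xi>. sig (r \<psi> a) \<xi> = sig \<psi> (lactO a \<xi>)) \<and>
     (\<forall>a \<psi> \<xi> b. sig (lact a \<psi>) (ractO \<xi> b) =
         (\<lambda>\<Phi>. (r (fst \<Phi>) b, r (snd \<Phi>) b)) (lactT a (sig \<psi> \<xi>))) \<and>
     (\<forall>\<psi> a. nabla (r \<psi> a) = (\<lambda>\<Phi>. (r (fst \<Phi>) a, r (snd \<Phi>) a)) (nabla \<psi>) + sig \<psi> (dA a))"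

definition pauli1 :: m2 where
  "pauli1 = (\<chi> i j. if i = j then 0 else 1)"
definition pauli2 :: m2 where
  "pauli2 = (\<chi> i j. if i = j then 0 else if i = 1 then - \<i> else \<i>)"
definition gamma1 :: m2 where "gamma1 = msc \<i> pauli1"
definition gamma2 :: m2 where "gamma2 = msc \<i> pauli2"

text \<open>Action of g tensor f on C^2 tensor M_2, identified with S via
  x (+) u <-> e_1 tensor x + e_2 tensor u.\<close>
definition tensact :: "m2 \<Rightarrow> (m2 \<Rightarrow> m2) \<Rightarrow> spinor \<Rightarrow> spinor" where
  "tensact g f \<psi> =
     (msc (g $ 1 $ 1) (f (fst \<psi>)) + msc (g $ 1 $ 2) (f (snd \<psi>)),
      msc (g $ 2 $ 1) (f (fst \<psi>)) + msc (g $ 2 $ 2) (f (snd \<psi>)))"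

end

theory Submission
  imports Defs
begin

text \<open>Since \<open>\<J>\<^sup>2 = -1\<close>, \<open>\<J>\<^sup>-\<^sup>1 = -\<J>\<close> and the right action \<open>\<J> a\<^sup>* \<J>\<^sup>-\<^sup>1\<close> is plain right
  multiplication by \<open>a\<close>, which commutes with every left multiplication. The Leibniz rule for
  commutators shows \<open>[D,a] \<psi> = da \<triangleright> \<psi>\<close>, again a left multiplication, which gives the
  order-zero and first-order conditions at once. Hermiticity of \<open>D\<close> follows from cyclicity of the
  trace together with \<open>E\<^sub>1\<^sub>2\<^sup>* = E\<^sub>2\<^sub>1\<close>; everything else is a direct computation.\<close>

lemmas m2_entrywise = vec_eq_iff forall_2 sum_2 matrix_matrix_mult_def mat_def
  madj_def mtr_def msc_def mcomm_def

lemma matrix_add_rdistrib: "(A + B) ** C = A ** C + B ** C"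
  by (vector matrix_matrix_mult_def sum.distrib[symmetric] field_simps)

lemma matrix_diff_ldistrib:
  fixes A :: "'a::ring_1^'n^'m"
  shows "A ** (B - C) = A ** B - A ** C"
  by (vector matrix_matrix_mult_def sum_subtractf[symmetric] field_simps)

lemma matrix_diff_rdistrib:
  fixes A :: "'a::ring_1^'n^'m"
  shows "(A - B) ** C = A ** C - B ** C"
  by (vector matrix_matrix_mult_def sum_subtractf[symmetric] field_simps)

lemma matrix_uminus_mult:
  fixes A :: "'a::ring_1^'n^'m"
  shows "(- A) ** B = - (A ** B)"
  by (vector matrix_matrix_mult_def sum_negf[symmetric])

lemma matrix_mult_uminus:
  fixes A :: "'a::ring_1^'n^'m"
  shows "A ** (- B) = - (A ** B)"
  by (vector matrix_matrix_mult_def sum_negf[symmetric])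

lemma madj_madj [simp]: "madj (madj m) = m"
  by (simp add: m2_entrywise)

lemma madj_uminus [simp]: "madj (- m) = - madj m"
  by (simp add: m2_entrywise)

lemma madj_diff: "madj (a - b) = madj a - madj b"
  by (simp add: m2_entrywise)

lemma madj_msc: "madj (msc c m) = msc (cnj c) (madj m)"
  by (simp add: m2_entrywise)

lemma madj_mult: "madj (a ** b) = madj b ** madj a"
  by (simp add: m2_entrywise mult.commute)

lemma madj_mcomm: "madj (mcomm a b) = mcomm (madj b) (madj a)"
  by (simp add: mcomm_def madj_diff madj_mult)

lemma madj_E12: "madj E12 = E21" and madj_E21: "madj E21 = E12"
  by (simp_all add: m2_entrywise E12_def E21_def E_def)

lemma msc_uminus: "msc c (- m) = - msc c m"
  by (simp add: m2_entrywise)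

lemma mtr_add: "mtr (a + b) = mtr a + mtr b"
  by (simp add: m2_entrywise)

lemma mtr_diff: "mtr (a - b) = mtr a - mtr b"
  by (simp add: m2_entrywise)

lemma mtr_mult_commute: "mtr (a ** b) = mtr (b ** a)"
  by (simp add: m2_entrywise mult.commute)

lemma mcomm_add: "mcomm e (a + b) = mcomm e a + mcomm e b"
  by (simp add: mcomm_def matrix_add_ldistrib matrix_add_rdistrib)

lemma mcomm_uminus: "mcomm e (- a) = - mcomm e a"
  by (simp add: mcomm_def matrix_uminus_mult matrix_mult_uminus)

lemma mcomm_anticommute: "mcomm a b = - mcomm b a"
  by (simp add: mcomm_def)

lemma mcomm_msc: "mcomm e (msc c a) = msc c (mcomm e a)"
  by (simp add: m2_entrywise algebra_simps)

lemma mcomm_mult: "mcomm e (a ** b) = mcomm e a ** b + a ** mcomm e b"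
  by (simp add: mcomm_def matrix_diff_ldistrib matrix_diff_rdistrib matrix_mul_assoc)

lemma mtr_madj_mcomm: "mtr (madj (mcomm e a) ** b) = mtr (madj a ** mcomm (madj e) b)"
proof -
  have "mtr (madj (mcomm e a) ** b) = mtr (madj a ** (madj e ** b)) - mtr (madj e ** madj a ** b)"
    by (simp only: madj_mcomm) (simp add: mcomm_def matrix_diff_rdistrib mtr_diff matrix_mul_assoc)
  also have "mtr (madj e ** madj a ** b) = mtr (madj a ** (b ** madj e))"
    by (metis matrix_mul_assoc mtr_mult_commute)
  finally show ?thesis
    by (simp add: mcomm_def matrix_diff_ldistrib mtr_diff)
qed

lemma Jop_uminus: "Jop (- \<psi>) = - Jop \<psi>"
  by (simp add: Jop_def)

lemma Jop_Jop: "Jop (Jop \<psi>) = - \<psi>"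
  by (simp add: Jop_def prod_eq_iff)

lemma inv_Jop: "inv Jop = (\<lambda>\<psi>. - Jop \<psi>)"
proof (rule inv_unique_comp)
  show "Jop \<circ> (\<lambda>\<psi>. - Jop \<psi>) = id" and "(\<lambda>\<psi>. - Jop \<psi>) \<circ> Jop = id"
    by (simp_all add: fun_eq_iff Jop_uminus Jop_Jop)
qed

lemma ract_eq: "ract \<psi> a = (fst \<psi> ** a, snd \<psi> ** a)"
  by (simp add: ract_def inv_Jop Jop_def lact_def madj_mult matrix_uminus_mult)

lemma Jop_lact_inv_Jop: "Jop (lact b (inv Jop \<psi>)) = ract \<psi> (madj b)"
  by (simp add: ract_def)

lemma lact_ract_commute: "lact a (ract \<psi> b) = ract (lact a \<psi>) b"
  by (simp add: ract_eq lact_def matrix_mul_assoc)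

lemma tri_ract: "tri \<xi> (ract \<psi> b) = ract (tri \<xi> \<psi>) b"
  by (simp add: ract_eq tri_def matrix_mul_assoc)

lemma Dop_lact_commutator: "Dop (lact a \<psi>) - lact a (Dop \<psi>) = tri (dA a) \<psi>"
  by (simp add: Dop_def lact_def tri_def dA_def mcomm_mult)

lemma nablaS_eq:
  "nablaS \<psi> = ((mcomm E12 (fst \<psi>), mcomm E12 (snd \<psi>)), (mcomm E21 (fst \<psi>), mcomm E21 (snd \<psi>)))"
  by (simp add: nablaS_def tens1_def dA_def lact_def)

lemma sigmaS_eq:
  "sigmaS \<psi> \<xi> = ((fst \<psi> ** fst \<xi>, snd \<psi> ** fst \<xi>), (fst \<psi> ** snd \<xi>, snd \<psi> ** snd \<xi>))"
  by (simp add: sigmaS_def tens1_def lactO_def lact_def)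

lemma Dop_eq_triT_nablaS: "Dop \<psi> = triT (nablaS \<psi>)"
  by (simp add: nablaS_eq triT_def tri_def Dop_def)

lemma left_bimodule_connection_nablaS_sigmaS: "left_bimodule_connection ract nablaS sigmaS"
  unfolding left_bimodule_connection_def
  by (simp add: nablaS_eq sigmaS_eq ract_eq tens1_def dA_def lact_def lactO_def ractO_def lactT_def
      ssc_def tsc_def mcomm_add mcomm_msc mcomm_mult matrix_add_ldistrib matrix_add_rdistrib
      matrix_mul_assoc)

lemma Dop_hermitian: "ip (Dop \<phi>) \<psi> = ip \<phi> (Dop \<psi>)"
  by (simp add: ip_def Dop_def mtr_add mtr_madj_mcomm madj_E12 madj_E21)

lemma gam_selfadjoint: "ip (gam \<phi>) \<psi> = ip \<phi> (gam \<psi>)"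
  by (simp add: ip_def gam_def matrix_uminus_mult matrix_mult_uminus)

lemma Jop_add: "Jop (\<phi> + \<psi>) = Jop \<phi> + Jop \<psi>"
  by (simp add: Jop_def madj_def vec_eq_iff)

lemma Jop_ssc: "Jop (ssc c \<psi>) = ssc (cnj c) (Jop \<psi>)"
  by (simp add: Jop_def ssc_def madj_msc msc_uminus)

lemma Jop_isometry: "ip (Jop \<psi>) (Jop \<phi>) = ip \<phi> \<psi>"
  by (simp add: ip_def Jop_def mtr_add matrix_uminus_mult matrix_mult_uminus
      mtr_mult_commute[of "snd \<psi>"] mtr_mult_commute[of "fst \<psi>"])

lemma Jop_gam: "Jop (gam \<psi>) = - gam (Jop \<psi>)"
  by (simp add: Jop_def gam_def)

lemma gam_lact: "gam (lact a \<psi>) = lact a (gam \<psi>)"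
  by (simp add: gam_def lact_def matrix_mult_uminus)

lemma Dop_gam: "Dop (gam \<psi>) = - gam (Dop \<psi>)"
  by (simp add: Dop_def gam_def mcomm_uminus)

lemma Jop_Dop: "Jop (Dop \<psi>) = Dop (Jop \<psi>)"
  by (simp add: Jop_def Dop_def madj_mcomm madj_E12 madj_E21 mcomm_uminus
      mcomm_anticommute[of "madj _"])

lemma order_zero_condition:
  "lact a (Jop (lact b (inv Jop \<psi>))) = Jop (lact b (inv Jop (lact a \<psi>)))"
  by (simp add: Jop_lact_inv_Jop lact_ract_commute)

lemma first_order_condition:
  "Dop (lact a (Jop (lact b (inv Jop \<psi>)))) - lact a (Dop (Jop (lact b (inv Jop \<psi>))))
     = Jop (lact b (inv Jop (Dop (lact a \<psi>) - lact a (Dop \<psi>))))"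
  by (simp only: Jop_lact_inv_Jop Dop_lact_commutator tri_ract)

text \<open>Entrywise, using \<open>E\<^sub>1\<^sub>2 = (\<sigma>\<^sup>1 + \<i>\<sigma>\<^sup>2)/2\<close> and \<open>E\<^sub>2\<^sub>1 = (\<sigma>\<^sup>1 - \<i>\<sigma>\<^sup>2)/2\<close>.\<close>
lemma Dop_Pauli_form:
  "Dop \<psi> = ssc (- 1 / 2) (tensact gamma1 (mcomm gamma1) \<psi> - tensact gamma2 (mcomm gamma2) \<psi>)"
  by (simp add: Dop_def ssc_def tensact_def gamma1_def gamma2_def pauli1_def pauli2_def
      E12_def E21_def E_def m2_entrywise prod_eq_iff algebra_simps)

theorem mainTheorem5:
  shows "left_bimodule_connection ract nablaS sigmaS
    \<and> (\<forall>\<psi> a. ract \<psi> a = (fst \<psi> ** a, snd \<psi> ** a))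
    \<and> (\<forall>\<psi>. Dop \<psi> = triT (nablaS \<psi>))
    \<and> (\<forall>\<phi> \<psi>. ip (Dop \<phi>) \<psi> = ip \<phi> (Dop \<psi>))
    \<and> (\<forall>\<phi> \<psi>. ip (gam \<phi>) \<psi> = ip \<phi> (gam \<psi>))
    \<and> (\<forall>\<phi> \<psi>. Jop (\<phi> + \<psi>) = Jop \<phi> + Jop \<psi>)
    \<and> (\<forall>c \<psi>. Jop (ssc c \<psi>) = ssc (cnj c) (Jop \<psi>))
    \<and> (\<forall>\<phi> \<psi>. ip (Jop \<psi>) (Jop \<phi>) = ip \<phi> \<psi>)
    \<and> (\<forall>\<psi>. Jop (Jop \<psi>) = - \<psi>)
    \<and> (\<forall>\<psi>. Jop (gam \<psi>) = - gam (Jop \<psi>))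
    \<and> (\<forall>\<psi>. gam (gam \<psi>) = \<psi>)
    \<and> (\<forall>a \<psi>. gam (lact a \<psi>) = lact a (gam \<psi>))
    \<and> (\<forall>\<psi>. Dop (gam \<psi>) = - gam (Dop \<psi>))
    \<and> (\<forall>a b \<psi>. lact a (Jop (lact b (inv Jop \<psi>))) = Jop (lact b (inv Jop (lact a \<psi>))))
    \<and> (\<forall>\<psi>. Jop (Dop \<psi>) = Dop (Jop \<psi>))
    \<and> (\<forall>a b \<psi>.
         (let Da = (\<lambda>\<phi>. Dop (lact a \<phi>) - lact a (Dop \<phi>));
              Jb = (\<lambda>\<phi>. Jop (lact b (inv Jop \<phi>)))
          in Da (Jb \<psi>) = Jb (Da \<psi>)))
    \<and> (\<forall>\<psi>. Dop \<psi> = ssc (- 1 / 2)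
           (tensact gamma1 (mcomm gamma1) \<psi> - tensact gamma2 (mcomm gamma2) \<psi>))"
  using left_bimodule_connection_nablaS_sigmaS ract_eq Dop_eq_triT_nablaS Dop_hermitian
    gam_selfadjoint Jop_add Jop_ssc Jop_isometry Jop_Jop Jop_gam gam_lact Dop_gam
    order_zero_condition Jop_Dop first_order_condition Dop_Pauli_form
  by (simp add: Let_def gam_def)

end
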